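(* Suppose $\psi\in\mathbb L^2(\mathbb S^1)$ and Assumption (A) holds: there is $\sigma_0>0$ with $\sigma(x)\ge\sigma_0$ for all $x\in\mathbb S^1$. Let $E^c=\{\omega\in\Omega:\exists x\in[0,2\pi),\ \hat\sigma(x)<\sigma_0/2\}$. Then for $m\in\mathcal M_n$, \[\mathbb E\big(\|\hat\psi_m-\psi\|_2^2\mathbb 1_{E^c}\big)\le(n\Phi_0^2+\|\psi\|_2^2)\,12\,e^{-2n\sigma_0^2/36}.\]
   Context: Identify $\mathbb S^1$ with $[0,2\pi)$ with its order and anticlockwise orientation; the arc $[x,y]$ is the usual interval if $x\le y$ and $[x,2\pi)\cup[0,y]$ if $x>y$. $\mathbb L^2(\mathbb S^1)$ carries $\langle g,h\rangle=\int gh$, norm $\|\cdot\|_2$. On a probability space $(\Omega,\mathcal F,\mathbb P)$, let $(X,L,U)$ be $\mathbb S^1$-valued, $X$ independent of $(L,U)$, $X$ with density $f$, $L\ne U$ a.s.; $(X_i,L_i,U_i)_{i\le n}$ i.i.d. copies. $\Delta_i=\mathbb 1_{\{X_i\in[L_i,U_i]\}}$, $X_i'=X_i$ if $\Delta_i=1$ and $-\pi$ otherwise. $\sigma(x)=\mathbb P(x\in[L,U])$, $\psi=f\sigma$, $\hat\sigma(x)=\frac1n\sum_i\mathbb 1_{\{x\in[L_i,U_i]\}}$. Linear sieves: finite-dimensional subspaces $(S_m)_{m\in\mathcal M_n}$ of $\mathbb L^2(\mathbb S^1)$, $\dim S_m=D_m\le n$, with $\Phi_0>0$ such that $\|t\|_\infty\le\Phi_0\sqrt{D_m}\|t\|_2$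 for $t\in S_m$ (equivalently $\|\sum_{\lambda\in\Lambda_m}\varphi_\lambda^2\|_\infty\le\Phi_0^2D_m$ for an orthonormal basis $(\varphi_\lambda)_{\lambda\in\Lambda_m}$). $\hat\psi_m=\sum_{\lambda\in\Lambda_m}\big(\frac1n\sum_i\Delta_i\varphi_\lambda(X_i')\big)\varphi_\lambda$. *)

theory Defs
  imports "HOL-Probability.Probability"
begin

text \<open>The circle S^1 is identified with [0, 2 pi).\<close>
definition S1 :: "real set" where
  "S1 = {0..<2*pi}"

text \<open>The arc [x,y] with the anticlockwise orientation.\<close>
definition arc :: "real \<Rightarrow> real \<Rightarrow> real set" where
  "arc x y = (if x \<le> y then {x..y} else {x..<2*pi} \<union> {0..y})"

definition L2sq :: "(real \<Rightarrow> real) \<Rightarrow> ennreal" where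
  "L2sq g = (\<integral>\<^sup>+ x \<in> S1. ennreal ((g x)\<^sup>2) \<partial>lborel)"

definition in_L2 :: "(real \<Rightarrow> real) \<Rightarrow> bool" where
  "in_L2 g \<longleftrightarrow> (\<lambda>x. g x * indicator S1 x) \<in> borel_measurable lborel \<and> L2sq g < \<infinity>"

definition cover_prob :: "'a measure \<Rightarrow> ('a \<Rightarrow> real) \<Rightarrow> ('a \<Rightarrow> real) \<Rightarrow> real \<Rightarrow> real" where
  "cover_prob M L U x = measure M {\<omega> \<in> space M. x \<in> arc (L \<omega>) (U \<omega>)}"

definition sigma_hat :: "nat \<Rightarrow> (nat \<Rightarrow> 'a \<Rightarrow> real) \<Rightarrow> (nat \<Rightarrow> 'a \<Rightarrow> real) \<Rightarrow> real \<Rightarrow> 'a \<Rightarrow> real" where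
  "sigma_hat n Ls Us x \<omega> = (1 / real n) * (\<Sum>i<n. indicator (arc (Ls i \<omega>) (Us i \<omega>)) x)"

definition Delta :: "(nat \<Rightarrow> 'a \<Rightarrow> real) \<Rightarrow> (nat \<Rightarrow> 'a \<Rightarrow> real) \<Rightarrow> (nat \<Rightarrow> 'a \<Rightarrow> real) \<Rightarrow> nat \<Rightarrow> 'a \<Rightarrow> real" where
  "Delta Xs Ls Us i \<omega> = indicator (arc (Ls i \<omega>) (Us i \<omega>)) (Xs i \<omega>)"

definition Xprime :: "(nat \<Rightarrow> 'a \<Rightarrow> real) \<Rightarrow> (nat \<Rightarrow> 'a \<Rightarrow> real) \<Rightarrow> (nat \<Rightarrow> 'a \<Rightarrow> real) \<Rightarrow> nat \<Rightarrow> 'a \<Rightarrow> real" where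
  "Xprime Xs Ls Us i \<omega> = (if Xs i \<omega> \<in> arc (Ls i \<omega>) (Us i \<omega>) then Xs i \<omega> else - pi)"

definition psi_hat :: "nat \<Rightarrow> 'l set \<Rightarrow> ('l \<Rightarrow> real \<Rightarrow> real) \<Rightarrow> (nat \<Rightarrow> 'a \<Rightarrow> real) \<Rightarrow>
    (nat \<Rightarrow> 'a \<Rightarrow> real) \<Rightarrow> (nat \<Rightarrow> 'a \<Rightarrow> real) \<Rightarrow> 'a \<Rightarrow> real \<Rightarrow> real" where
  "psi_hat n \<Lambda> \<phi> Xs Ls Us \<omega> x =
     (\<Sum>l\<in>\<Lambda>. ((1 / real n) * (\<Sum>i<n. Delta Xs Ls Us i \<omega> * \<phi> l (Xprime Xs Ls Us i \<omega>))) * \<phi> l x)"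

end

theory Submission
  imports Defs
begin

text \<open>
  Off a null set of samples, orthonormality, Cauchy-Schwarz and the sup-norm bound on the basis give
  \<open>\<parallel>\<psi>\<^sub>m\<parallel>\<^sup>2 \<le> n \<Phi>\<^sub>0\<^sup>2\<close> for the estimator, hence \<open>\<parallel>\<psi>\<^sub>m - \<psi>\<parallel>\<^sup>2 \<le> 2 n \<Phi>\<^sub>0\<^sup>2 + 2 \<parallel>\<psi>\<parallel>\<^sup>2\<close>, and it remains
  to show \<open>P(E\<^sup>c) \<le> 6 exp (- n \<sigma>\<^sub>0\<^sup>2 / 18)\<close>.
  Cut the circle at quantiles of the pooled distribution of the endpoints \<open>L\<close> and \<open>U\<close> into
  \<open>O(1 / \<sigma>\<^sub>0)\<close> cells, each containing endpoint mass at most \<open>\<sigma>\<^sub>0 / 10\<close>. A point \<open>x\<close> strictly inside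
  a cell is covered by every arc spanning that cell, and these arcs have probability at least
  \<open>\<sigma>(x) - \<sigma>\<^sub>0 / 10\<close>; a cut point is handled by the arcs through it. So \<open>E\<^sup>c\<close> lies in a finite
  union of events "fewer than \<open>n \<sigma>\<^sub>0 / 2\<close> of the \<open>n\<close> i.i.d. arcs fall into a fixed set of probability
  at least \<open>9 \<sigma>\<^sub>0 / 10\<close>", each bounded by a multiplicative Chernoff bound; because that bound decays
  like \<open>exp (- c n \<sigma>\<^sub>0)\<close>, it absorbs the number \<open>O(1 / \<sigma>\<^sub>0)\<close> of cells.
\<close>

lemma one_minus_le_exp_minus_quadratic:
  fixes x :: real assumes "0 \<le> x" "x < 1"
  shows "1 - x \<le> exp (- x - x\<^sup>2 / 2)"
proof -
  define h where "h t = - t - t\<^sup>2 / 2 - ln (1 - t)" for t :: real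
  have "h 0 \<le> h x"
  proof (rule DERIV_nonneg_imp_nondecreasing[OF assms(1)])
    fix t assume "0 \<le> t" "t \<le> x"
    with assms have t: "0 \<le> t" "t < 1" by linarith+
    have "DERIV h t :> t\<^sup>2 / (1 - t)"
      unfolding h_def using t
      by (auto intro!: derivative_eq_intros simp: power2_eq_square field_simps)
    then show "\<exists>y. DERIV h t :> y \<and> 0 \<le> y" using t by auto
  qed
  then have "exp (ln (1 - x)) \<le> exp (- x - x\<^sup>2 / 2)" by (simp add: h_def)
  then show ?thesis using assms by simp
qed

lemma ln_2_le_three_quarters: "ln (2::real) \<le> 3 / 4"
proof -
  have "2 \<le> 1 + 3/4 + (3/4::real)\<^sup>2 / 2" by (simp add: power2_eq_square)
  also have "\<dots> \<le> exp (3/4)" by (rule exp_lower_Taylor_quadratic) simp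
  finally have "ln 2 \<le> ln (exp (3/4::real))" by (subst ln_le_cancel_iff) auto
  then show ?thesis by simp
qed

section \<open>A Chernoff bound for i.i.d. counts\<close>

lemma (in prob_space) expectation_prod_iid:
  fixes T :: "nat \<Rightarrow> 'a \<Rightarrow> 'b" and h :: "'b \<Rightarrow> real"
  assumes indep: "indep_vars (\<lambda>_. N) T {..<n}"
    and distr_eq: "\<forall>i<n. distr M N (T i) = distr M N T0"
    and T0: "T0 \<in> measurable M N" and h: "h \<in> borel_measurable N" and bounded: "\<And>y. \<bar>h y\<bar> \<le> C"
  shows "integrable M (\<lambda>\<omega>. \<Prod>i<n. h (T i \<omega>))"
    and "expectation (\<lambda>\<omega>. \<Prod>i<n. h (T i \<omega>)) = expectation (\<lambda>\<omega>. h (T0 \<omega>)) ^ n"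
proof -
  have T: "T i \<in> measurable M N" if "i < n" for i
    using indep that unfolding indep_vars_def by auto
  have indep_h: "indep_vars (\<lambda>_. borel) (\<lambda>i \<omega>. h (T i \<omega>)) {..<n}"
    by (rule indep_vars_compose2[OF indep]) (simp add: h)
  have integrable_h: "integrable M (\<lambda>\<omega>. h (T i \<omega>))" if "i < n" for i
    using that T h bounded by (intro integrable_const_bound[where B=C]) auto
  show "integrable M (\<lambda>\<omega>. \<Prod>i<n. h (T i \<omega>))"
    by (rule indep_vars_integrable[OF _ indep_h integrable_h]) auto
  have identical: "expectation (\<lambda>\<omega>. h (T i \<omega>)) = expectation (\<lambda>\<omega>. h (T0 \<omega>))" if "i < n" for i
  proof -
    have "expectation (\<lambda>\<omega>. h (T i \<omega>)) = integral\<^sup>L (distr M N (T i)) h"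
      using that T h by (simp add: integral_distr)
    also have "\<dots> = integral\<^sup>L (distr M N T0) h"
      using that distr_eq by simp
    also have "\<dots> = expectation (\<lambda>\<omega>. h (T0 \<omega>))"
      using T0 h by (simp add: integral_distr)
    finally show ?thesis .
  qed
  have "expectation (\<lambda>\<omega>. \<Prod>i<n. h (T i \<omega>)) = (\<Prod>i<n. expectation (\<lambda>\<omega>. h (T i \<omega>)))"
    by (rule indep_vars_lebesgue_integral[OF _ indep_h integrable_h]) auto
  also have "\<dots> = expectation (\<lambda>\<omega>. h (T0 \<omega>)) ^ n"
    by (simp add: identical)
  finally show "expectation (\<lambda>\<omega>. \<Prod>i<n. h (T i \<omega>)) = expectation (\<lambda>\<omega>. h (T0 \<omega>)) ^ n" .
qed

lemma (in prob_space) prob_count_less_le: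
  fixes T :: "nat \<Rightarrow> 'a \<Rightarrow> 'b"
  assumes indep: "indep_vars (\<lambda>_. N) T {..<n}"
    and distr_eq: "\<forall>i<n. distr M N (T i) = distr M N T0"
    and T0[measurable]: "T0 \<in> measurable M N" and B[measurable]: "B \<in> sets N"
    and q: "q \<le> prob {\<omega>\<in>space M. T0 \<omega> \<in> B}"
  shows "prob {\<omega>\<in>space M. (\<Sum>i<n. indicator B (T i \<omega>)) < c} \<le> (1 - q / 2) ^ n * 2 powr c"
proof -
  have T[measurable]: "T i \<in> measurable M N" if "i < n" for i
    using indep that unfolding indep_vars_def by auto
  \<comment> \<open>Markov's inequality for \<open>2 powr (- count)\<close>, which factorises over the samples\<close>
  define h :: "'b \<Rightarrow> real" where "h y = 2 powr (- indicator B y)" for y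
  have h[measurable]: "h \<in> borel_measurable N" unfolding h_def by measurable
  have h_eq: "h y = 1 - indicator B y / 2" for y by (simp add: h_def indicator_def powr_minus)
  have h_bounds: "0 \<le> h y" "\<bar>h y\<bar> \<le> 1" for y by (simp_all add: h_eq indicator_def)
  have prod_h: "(\<Prod>i<n. h (T i \<omega>)) = 2 powr (- (\<Sum>i<n. indicator B (T i \<omega>)))" for \<omega>
    by (simp add: h_def powr_sum flip: sum_negf)
  note expectation_prod = expectation_prod_iid[OF indep distr_eq T0 h h_bounds(2)]
  have "expectation (\<lambda>\<omega>. h (T0 \<omega>)) = expectation (\<lambda>\<omega>. 1 - indicator {\<omega>\<in>space M. T0 \<omega> \<in> B} \<omega> / 2)"
    by (intro Bochner_Integration.integral_cong) (auto simp: h_eq indicator_def)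
  also have "\<dots> = 1 - prob {\<omega>\<in>space M. T0 \<omega> \<in> B} / 2"
    by (subst Bochner_Integration.integral_diff) (auto simp: prob_space less_top[symmetric])
  finally have expectation_h: "expectation (\<lambda>\<omega>. h (T0 \<omega>)) \<le> 1 - q / 2" using q by simp
  have "prob {\<omega>\<in>space M. (\<Sum>i<n. indicator B (T i \<omega>)) < c}
      \<le> prob {\<omega>\<in>space M. 2 powr (- c) \<le> (\<Prod>i<n. h (T i \<omega>))}"
    by (rule finite_measure_mono) (auto simp: prod_h)
  also have "\<dots> \<le> expectation (\<lambda>\<omega>. \<Prod>i<n. h (T i \<omega>)) / 2 powr (- c)"
    by (rule integral_Markov_inequality_measure[OF expectation_prod(1), where A="space M"])
      (auto simp: h_bounds prod_nonneg)
  also have "\<dots> = expectation (\<lambda>\<omega>. h (T0 \<omega>)) ^ n * 2 powr c"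
    by (simp add: expectation_prod(2) divide_powr_uminus)
  also have "\<dots> \<le> (1 - q / 2) ^ n * 2 powr c"
    using expectation_h h_bounds by (intro mult_right_mono power_mono integral_nonneg_AE) auto
  finally show ?thesis .
qed

lemma linear_times_exp_le:
  fixes y :: real assumes "1 \<le> y"
  shows "(40 * y + 1) * exp (- 2 * y) \<le> 41 * exp (- 2)"
proof -
  have "y \<le> exp (2 * y - 2)" using exp_ge_add_one_self[of "2 * y - 2"] assms by linarith
  then have "y * exp (- 2 * y) \<le> exp (2 * y - 2) * exp (- 2 * y)" by (rule mult_right_mono) simp
  also have "\<dots> = exp (- 2)" by (simp add: mult_exp_exp)
  finally have "y * exp (- 2 * y) \<le> exp (- 2)" .
  moreover have "exp (- 2 * y) \<le> y * exp (- 2 * y)" using assms by simp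
  moreover have "(40 * y + 1) * exp (- 2 * y) = 40 * (y * exp (- 2 * y)) + exp (- 2 * y)"
    by (simp add: algebra_simps)
  ultimately show ?thesis by linarith
qed

lemma chernoff_factor_le:
  fixes s :: real and n :: nat
  assumes s: "0 \<le> s" "s \<le> 1"
  shows "(1 - 9 / 20 * s) ^ n * 2 powr (real n * s / 2)
    \<le> exp (- 3 / 40 * (real n * s) - 81 / 800 * (real n * s\<^sup>2))"
proof -
  have "(1 - 9 / 20 * s) ^ n \<le> exp (- (9 / 20 * s) - (9 / 20 * s)\<^sup>2 / 2) ^ n"
    using s one_minus_le_exp_minus_quadratic[of "9 / 20 * s"] by (intro power_mono) auto
  also have "\<dots> = exp (- 9 / 20 * (real n * s) - 81 / 800 * (real n * s\<^sup>2))"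
    by (simp add: power2_eq_square algebra_simps flip: exp_of_nat_mult)
  finally have binomial: "(1 - 9 / 20 * s) ^ n \<le> exp (- 9 / 20 * (real n * s) - 81 / 800 * (real n * s\<^sup>2))" .
  have "2 powr (real n * s / 2) = exp (ln 2 * (real n * s) / 2)" by (simp add: powr_def)
  also have "\<dots> \<le> exp (3 / 8 * (real n * s))"
    using mult_right_mono[OF ln_2_le_three_quarters, of "real n * s"] s by (simp add: mult_ac)
  finally have power: "2 powr (real n * s / 2) \<le> exp (3 / 8 * (real n * s))" .
  have "(1 - 9 / 20 * s) ^ n * 2 powr (real n * s / 2)
      \<le> exp (- 9 / 20 * (real n * s) - 81 / 800 * (real n * s\<^sup>2)) * exp (3 / 8 * (real n * s))"
    using s by (intro mult_mono binomial power) auto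
  also have "\<dots> = exp (- 3 / 40 * (real n * s) - 81 / 800 * (real n * s\<^sup>2))"
    by (simp add: mult_exp_exp algebra_simps)
  finally show ?thesis .
qed

lemma chernoff_union_bound_le:
  fixes s K :: real and n :: nat
  assumes s: "0 < s" "s \<le> 1" and large: "6 < exp (real n * s\<^sup>2 / 18)"
    and K: "0 \<le> K" "K \<le> 20 / s"
  shows "(2 * K + 1) * ((1 - 9 / 20 * s) ^ n * 2 powr (real n * s / 2))
    \<le> 6 * exp (- 2 * real n * s\<^sup>2 / 36)"
proof -
  define w where "w = real n * s\<^sup>2"
  define y where "y = 1 / s"
  have y: "1 \<le> y" and ns: "real n * s = w * y"
    using s by (simp_all add: y_def w_def power2_eq_square)
  have w: "27 < w"
  proof -
    have "exp (3 / 2 :: real) ^ 2 = exp 1 ^ 3" by (simp flip: exp_of_nat_mult)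
    also have "\<dots> \<le> 3 ^ 3" by (intro power_mono exp_le) simp
    also have "\<dots> < 6 ^ 2" by simp
    finally have "exp (3 / 2 :: real) < 6" by (rule power_less_imp_less_base) simp
    with large have "exp (3 / 2 :: real) < exp (w / 18)" unfolding w_def by linarith
    then show ?thesis by simp
  qed
  \<comment> \<open>the factor \<open>exp (- 3 / 40 * w * y)\<close> absorbs the number \<open>2 K + 1 \<le> 40 y + 1\<close> of events\<close>
  have "(2 * K + 1) * ((1 - 9 / 20 * s) ^ n * 2 powr (real n * s / 2))
      \<le> (40 * y + 1) * exp (- 3 / 40 * (real n * s) - 81 / 800 * (real n * s\<^sup>2))"
    using K s chernoff_factor_le[of s n] by (intro mult_mono) (auto simp: y_def)
  also have "\<dots> \<le> (40 * y + 1) * exp (- 2 * y - 1 - w / 18)"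
  proof -
    have "27 * y \<le> w * y" using w y by (intro mult_right_mono) auto
    then have "- 3 / 40 * (w * y) - 81 / 800 * w \<le> - 2 * y - 1 - w / 18" using w y by linarith
    then show ?thesis using y by (intro mult_left_mono) (auto simp: ns w_def)
  qed
  also have "\<dots> = (40 * y + 1) * exp (- 2 * y) * exp (- 1) * exp (- w / 18)"
    by (simp add: mult_exp_exp)
  also have "\<dots> \<le> 41 * exp (- 2) * exp (- 1) * exp (- w / 18)"
    using linear_times_exp_le[OF y] by (intro mult_right_mono) auto
  also have "\<dots> = 41 / exp 3 * exp (- w / 18)"
    by (simp add: mult_exp_exp exp_minus field_simps)
  also have "\<dots> \<le> 6 * exp (- w / 18)"
  proof -
    have "(2::real) ^ 3 \<le> exp 1 ^ 3" using exp_ge_add_one_self[of 1] by (intro power_mono) auto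
    then have "8 \<le> exp (3::real)" by (simp flip: exp_of_nat_mult)
    then show ?thesis by (intro mult_right_mono) (auto simp: field_simps)
  qed
  also have "\<dots> = 6 * exp (- 2 * real n * s\<^sup>2 / 36)" by (simp add: w_def)
  finally show ?thesis .
qed

lemma distr_compose_eq:
  assumes "distr M N X = distr M N Y" "X \<in> measurable M N" "Y \<in> measurable M N" "g \<in> measurable N K"
  shows "distr M K (\<lambda>\<omega>. g (X \<omega>)) = distr M K (\<lambda>\<omega>. g (Y \<omega>))"
proof -
  have "distr M K (\<lambda>\<omega>. g (X \<omega>)) = distr (distr M N X) K g"
    using assms(2,4) by (simp add: distr_distr comp_def)
  also have "\<dots> = distr M K (\<lambda>\<omega>. g (Y \<omega>))"
    using assms(1,3,4) by (simp add: distr_distr comp_def)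
  finally show ?thesis .
qed

lemma AE_all_identically_distributed:
  fixes n :: nat
  assumes distr_eq: "\<forall>i<n. distr M N (Y i) = distr M N Y0"
    and measurable: "\<forall>i<n. Y i \<in> measurable M N" "Y0 \<in> measurable M N"
    and C: "C \<in> sets N" and AE: "AE \<omega> in M. Y0 \<omega> \<in> C"
  shows "AE \<omega> in M. \<forall>i<n. Y i \<omega> \<in> C"
proof -
  have "AE \<omega> in M. Y i \<omega> \<in> C" if "i < n" for i
  proof -
    have "distr M N (Y i) = distr M N Y0" using distr_eq that by blast
    moreover have "AE y in distr M N Y0. y \<in> C" using AE measurable C by (simp add: AE_distr_iff)
    ultimately have "AE y in distr M N (Y i). y \<in> C" by (simp only:)
    then show ?thesis using measurable C that by (simp add: AE_distr_iff)
  qed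
  then have "AE \<omega> in M. \<forall>i\<in>{..<n}. Y i \<omega> \<in> C" by (intro AE_finite_allI) auto
  then show ?thesis by (rule eventually_mono) simp
qed

lemma AE_distributed_not_in_null_set:
  assumes X: "distributed M lborel X f" and N: "N \<in> null_sets lborel"
  shows "AE \<omega> in M. X \<omega> \<notin> N"
proof -
  have "AE x in density lborel f. x \<notin> N"
    by (subst AE_density[OF distributed_borel_measurable[OF X]])
      (rule eventually_mono[OF AE_not_in[OF N]], simp)
  then have "AE x in distr M lborel X. x \<notin> N"
    unfolding distributed_distr_eq_density[OF X] .
  then show ?thesis
    using N distributed_measurable[OF X] by (subst (asm) AE_distr_iff) auto
qed

lemma (in prob_space) iid_triple_marginals:
  fixes X L U :: "'a \<Rightarrow> real" and Xs Ls Us :: "nat \<Rightarrow> 'a \<Rightarrow> real"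
  assumes indep: "indep_vars (\<lambda>_. borel) (\<lambda>i \<omega>. (Xs i \<omega>, Ls i \<omega>, Us i \<omega>)) {..<n}"
    and distr_eq: "\<forall>i<n. distr M borel (\<lambda>\<omega>. (Xs i \<omega>, Ls i \<omega>, Us i \<omega>))
      = distr M borel (\<lambda>\<omega>. (X \<omega>, L \<omega>, U \<omega>))"
    and [measurable]: "X \<in> borel_measurable M" "L \<in> borel_measurable M" "U \<in> borel_measurable M"
  shows "indep_vars (\<lambda>_. borel) (\<lambda>i \<omega>. (Ls i \<omega>, Us i \<omega>)) {..<n}"
    and "\<forall>i<n. distr M borel (\<lambda>\<omega>. (Ls i \<omega>, Us i \<omega>)) = distr M borel (\<lambda>\<omega>. (L \<omega>, U \<omega>))"
    and "\<forall>i<n. Xs i \<in> borel_measurable M"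
    and "\<forall>i<n. distr M borel (Xs i) = distr M borel X"
proof -
  have fst: "fst \<in> borel_measurable (borel :: (real \<times> real \<times> real) measure)"
    and snd: "snd \<in> measurable (borel :: (real \<times> real \<times> real) measure) borel"
    by (simp_all flip: borel_prod)
  have samples: "(\<lambda>\<omega>. (Xs i \<omega>, Ls i \<omega>, Us i \<omega>)) \<in> borel_measurable M" if "i < n" for i
    using indep that by (auto simp: indep_vars_def)
  have "(\<lambda>\<omega>. (X \<omega>, L \<omega>, U \<omega>)) \<in> borel_measurable M" by measurable
  note distr_compose = distr_compose_eq[OF distr_eq[rule_format] samples this]
  show "indep_vars (\<lambda>_. borel) (\<lambda>i \<omega>. (Ls i \<omega>, Us i \<omega>)) {..<n}"
    using indep_vars_compose2[OF indep snd] by simp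
  show "\<forall>i<n. distr M borel (\<lambda>\<omega>. (Ls i \<omega>, Us i \<omega>)) = distr M borel (\<lambda>\<omega>. (L \<omega>, U \<omega>))"
    using distr_compose[OF _ _ snd] by (simp only: snd_conv) blast
  show "\<forall>i<n. Xs i \<in> borel_measurable M"
    using measurable_compose[OF samples fst] by simp
  show "\<forall>i<n. distr M borel (Xs i) = distr M borel X"
    using distr_compose[OF _ _ fst] by (simp only: fst_conv) blast
qed

section \<open>Arcs of the circle\<close>

definition arcs_containing :: "real \<Rightarrow> (real \<times> real) set" where
  "arcs_containing x = {p. x \<in> arc (fst p) (snd p)}"

text \<open>The arcs \<open>[l, u]\<close> containing the whole gap between \<open>a\<close> and \<open>b\<close>, with no endpoint inside it.\<close>

definition arcs_spanning :: "real \<Rightarrow> real \<Rightarrow> (real \<times> real) set" where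
  "arcs_spanning a b = {p. (fst p \<le> snd p \<and> fst p \<le> a \<and> b \<le> snd p) \<or> (snd p < fst p \<and> (fst p \<le> a \<or> b \<le> snd p))}"

lemma mem_arc_iff:
  "x \<in> arc l u \<longleftrightarrow> (l \<le> u \<and> l \<le> x \<and> x \<le> u) \<or> (u < l \<and> (l \<le> x \<and> x < 2 * pi \<or> 0 \<le> x \<and> x \<le> u))"
  by (auto simp: arc_def)

lemma sets_borel_pair_predicate:
  assumes "Measurable.pred (borel \<Otimes>\<^sub>M borel) P"
  shows "{p :: real \<times> real. P p} \<in> sets borel"
  using assms by (simp add: pred_def borel_prod[symmetric] space_pair_measure)

lemma arcs_containing_sets [measurable]: "arcs_containing x \<in> sets borel"
  unfolding arcs_containing_def mem_arc_iff by (intro sets_borel_pair_predicate) measurable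

lemma arcs_spanning_sets [measurable]: "arcs_spanning a b \<in> sets borel"
  unfolding arcs_spanning_def by (intro sets_borel_pair_predicate) measurable

lemma arcs_spanning_subset:
  "x \<in> S1 \<Longrightarrow> a < x \<Longrightarrow> x < b \<Longrightarrow> arcs_spanning a b \<subseteq> arcs_containing x"
  by (auto simp: arcs_spanning_def arcs_containing_def mem_arc_iff S1_def)

lemma arcs_containing_subset:
  "x \<in> S1 \<Longrightarrow> a < x \<Longrightarrow> x < b \<Longrightarrow>
    arcs_containing x \<subseteq> arcs_spanning a b \<union> {p. a < fst p \<and> fst p < b} \<union> {p. a < snd p \<and> snd p < b}"
  by (auto simp: arcs_spanning_def arcs_containing_def mem_arc_iff S1_def)

lemma low_empirical_coverage_subset:
  fixes Ls Us :: "nat \<Rightarrow> 'a \<Rightarrow> real"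
  assumes n: "0 < n" and cover: "\<forall>x\<in>S1. \<exists>B\<in>\<F>. B \<subseteq> arcs_containing x"
  shows "{\<omega>\<in>space M. \<exists>x\<in>S1. sigma_hat n Ls Us x \<omega> < s / 2}
    \<subseteq> (\<Union>B\<in>\<F>. {\<omega>\<in>space M. (\<Sum>i<n. indicator B (Ls i \<omega>, Us i \<omega>)) < real n * s / 2})"
proof safe
  fix \<omega> x assume \<omega>: "\<omega> \<in> space M" and x: "x \<in> S1" "sigma_hat n Ls Us x \<omega> < s / 2"
  obtain B where B: "B \<in> \<F>" "B \<subseteq> arcs_containing x" using cover x by blast
  have "(\<Sum>i<n. indicator B (Ls i \<omega>, Us i \<omega>)) \<le> (\<Sum>i<n. indicator (arc (Ls i \<omega>) (Us i \<omega>)) x :: real)"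
    using B by (intro sum_mono) (auto simp: arcs_containing_def indicator_def)
  also have "\<dots> = real n * sigma_hat n Ls Us x \<omega>" using n by (simp add: sigma_hat_def)
  also have "\<dots> < real n * s / 2" using x n by simp
  finally show "\<omega> \<in> (\<Union>B\<in>\<F>. {\<omega>\<in>space M. (\<Sum>i<n. indicator B (Ls i \<omega>, Us i \<omega>)) < real n * s / 2})"
    using \<omega> B by auto
qed

section \<open>Quantile cells of the endpoint distribution\<close>

locale random_arc = prob_space +
  fixes L U :: "'a \<Rightarrow> real"
  assumes measurable_L [measurable]: "L \<in> borel_measurable M"
    and measurable_U [measurable]: "U \<in> borel_measurable M"
    and endpoints_in_S1: "\<forall>\<omega>\<in>space M. L \<omega> \<in> S1 \<and> U \<omega> \<in> S1"
begin

definition endpoint_cdf :: "real \<Rightarrow> real" where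
  "endpoint_cdf y = prob {\<omega>\<in>space M. L \<omega> \<le> y} + prob {\<omega>\<in>space M. U \<omega> \<le> y}"

definition endpoint_quantile :: "real \<Rightarrow> real" where
  "endpoint_quantile c = Inf {y. c \<le> endpoint_cdf y}"

lemma endpoint_cdf_eq_cdf: "endpoint_cdf y = cdf (distr M borel L) y + cdf (distr M borel U) y"
  by (simp add: endpoint_cdf_def cdf_def measure_distr vimage_def Int_def conj_commute)

lemma endpoint_cdf_mono: "y \<le> z \<Longrightarrow> endpoint_cdf y \<le> endpoint_cdf z"
  unfolding endpoint_cdf_def by (intro add_mono finite_measure_mono) auto

lemma endpoint_cdf_nonneg: "0 \<le> endpoint_cdf y"
  by (simp add: endpoint_cdf_def)

lemma endpoint_cdf_le_2: "endpoint_cdf y \<le> 2"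
  unfolding endpoint_cdf_def using add_mono[OF prob_le_1 prob_le_1] by simp

lemma endpoint_cdf_neg: "y < 0 \<Longrightarrow> endpoint_cdf y = 0"
proof -
  assume "y < 0"
  then have "{\<omega>\<in>space M. L \<omega> \<le> y} = {}" "{\<omega>\<in>space M. U \<omega> \<le> y} = {}"
    using endpoints_in_S1 by (auto simp: S1_def)
  then show ?thesis by (simp only: endpoint_cdf_def measure_empty)
qed

lemma endpoint_cdf_2pi: "endpoint_cdf (2 * pi) = 2"
proof -
  have "{\<omega>\<in>space M. L \<omega> \<le> 2 * pi} = space M" "{\<omega>\<in>space M. U \<omega> \<le> 2 * pi} = space M"
    using endpoints_in_S1 by (auto simp: S1_def less_imp_le)
  then show ?thesis by (simp add: endpoint_cdf_def prob_space)
qed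

lemma continuous_at_right_endpoint_cdf: "continuous (at_right y) endpoint_cdf"
proof -
  interpret L: real_distribution "distr M borel L" by simp
  interpret U: real_distribution "distr M borel U" by simp
  show ?thesis
    unfolding endpoint_cdf_eq_cdf[abs_def] by (intro continuous_add L.cdf_is_right_cont U.cdf_is_right_cont)
qed

lemma endpoint_cdf_at_left:
  "(endpoint_cdf \<longlongrightarrow> prob {\<omega>\<in>space M. L \<omega> < b} + prob {\<omega>\<in>space M. U \<omega> < b}) (at_left b)"
proof -
  interpret L: real_distribution "distr M borel L" by simp
  interpret U: real_distribution "distr M borel U" by simp
  have "prob {\<omega>\<in>space M. V \<omega> < b} = measure (distr M borel V) {..<b}" if "V \<in> borel_measurable M" for V
    using that by (simp add: measure_distr vimage_def Int_def conj_commute)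
  then show ?thesis
    unfolding endpoint_cdf_eq_cdf[abs_def] by (simp add: tendsto_add L.cdf_at_left U.cdf_at_left)
qed

lemma bdd_below_endpoint_cdf_superlevel: "0 < c \<Longrightarrow> bdd_below {y. c \<le> endpoint_cdf y}"
  by (intro bdd_belowI[of _ 0]) (metis endpoint_cdf_neg not_le mem_Collect_eq)

lemma endpoint_quantile_le: "0 < c \<Longrightarrow> c \<le> endpoint_cdf x \<Longrightarrow> endpoint_quantile c \<le> x"
  unfolding endpoint_quantile_def by (auto intro: cInf_lower bdd_below_endpoint_cdf_superlevel)

lemma endpoint_cdf_less_quantile:
  "0 < c \<Longrightarrow> y < endpoint_quantile c \<Longrightarrow> endpoint_cdf y < c"
  using endpoint_quantile_le by (meson not_le)

lemma le_endpoint_cdf_quantile: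
  assumes c: "0 < c" "c \<le> 2"
  shows "c \<le> endpoint_cdf (endpoint_quantile c)"
proof (rule tendsto_lowerbound)
  show "(endpoint_cdf \<longlongrightarrow> endpoint_cdf (endpoint_quantile c)) (at_right (endpoint_quantile c))"
    using continuous_at_right_endpoint_cdf by (simp add: continuous_within)
  have "c \<le> endpoint_cdf y" if y: "endpoint_quantile c < y" for y
  proof -
    have "{y. c \<le> endpoint_cdf y} \<noteq> {}" using c endpoint_cdf_2pi by (auto intro!: exI[of _ "2 * pi"])
    then obtain z where "c \<le> endpoint_cdf z" "z < y"
      using y cInf_less_iff[OF _ bdd_below_endpoint_cdf_superlevel[OF c(1)]]
      unfolding endpoint_quantile_def by auto
    then show ?thesis using endpoint_cdf_mono[of z y] by simp
  qed
  then show "\<forall>\<^sub>F y in at_right (endpoint_quantile c). c \<le> endpoint_cdf y"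
    by (auto intro: eventually_mono[OF eventually_at_right_real[of _ "endpoint_quantile c + 1"]])
qed simp

lemma endpoint_mass_le:
  assumes ab: "a < b" and increment: "\<And>y. a < y \<Longrightarrow> y < b \<Longrightarrow> endpoint_cdf y \<le> endpoint_cdf a + d"
  shows "prob {\<omega>\<in>space M. a < L \<omega> \<and> L \<omega> < b} + prob {\<omega>\<in>space M. a < U \<omega> \<and> U \<omega> < b} \<le> d"
proof -
  have "eventually (\<lambda>y. endpoint_cdf y \<le> endpoint_cdf a + d) (at_left b)"
    using eventually_at_left_real[OF ab] by (rule eventually_mono) (auto intro: increment)
  then have "prob {\<omega>\<in>space M. L \<omega> < b} + prob {\<omega>\<in>space M. U \<omega> < b} \<le> endpoint_cdf a + d"
    by (rule tendsto_upperbound[OF endpoint_cdf_at_left]) simp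
  moreover have "prob {\<omega>\<in>space M. a < V \<omega> \<and> V \<omega> < b}
      = prob {\<omega>\<in>space M. V \<omega> < b} - prob {\<omega>\<in>space M. V \<omega> \<le> a}"
    if [measurable]: "V \<in> borel_measurable M" for V
  proof -
    have "{\<omega>\<in>space M. a < V \<omega> \<and> V \<omega> < b} = {\<omega>\<in>space M. V \<omega> < b} - {\<omega>\<in>space M. V \<omega> \<le> a}"
      by auto
    also have "prob \<dots> = prob {\<omega>\<in>space M. V \<omega> < b} - prob {\<omega>\<in>space M. V \<omega> \<le> a}"
      using ab by (intro finite_measure_Diff) auto
    finally show ?thesis .
  qed
  ultimately show ?thesis by (simp add: endpoint_cdf_def)
qed

lemma cover_prob_le_arcs_spanning:
  assumes "x \<in> S1" "a < x" "x < b"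
  shows "cover_prob M L U x \<le> prob {\<omega>\<in>space M. (L \<omega>, U \<omega>) \<in> arcs_spanning a b}
    + (prob {\<omega>\<in>space M. a < L \<omega> \<and> L \<omega> < b} + prob {\<omega>\<in>space M. a < U \<omega> \<and> U \<omega> < b})"
proof -
  have "cover_prob M L U x = prob {\<omega>\<in>space M. (L \<omega>, U \<omega>) \<in> arcs_containing x}"
    by (simp add: cover_prob_def arcs_containing_def)
  also have "\<dots> \<le> prob ({\<omega>\<in>space M. (L \<omega>, U \<omega>) \<in> arcs_spanning a b}
      \<union> ({\<omega>\<in>space M. a < L \<omega> \<and> L \<omega> < b} \<union> {\<omega>\<in>space M. a < U \<omega> \<and> U \<omega> < b}))"
    using arcs_containing_subset[OF assms] by (intro finite_measure_mono) auto
  also have "\<dots> \<le> prob {\<omega>\<in>space M. (L \<omega>, U \<omega>) \<in> arcs_spanning a b}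
      + (prob {\<omega>\<in>space M. a < L \<omega> \<and> L \<omega> < b} + prob {\<omega>\<in>space M. a < U \<omega> \<and> U \<omega> < b})"
    by (intro order.trans[OF measure_Un_le] add_left_mono measure_Un_le) auto
  finally show ?thesis .
qed

text \<open>The outer cut points \<open>-1\<close> and \<open>2 \<pi> + 1\<close> lie just outside \<open>S1\<close>; \<open>endpoint_quantile 0\<close> would be
  the infimum of the unbounded set \<open>UNIV\<close>.\<close>

definition quantile_grid :: "real \<Rightarrow> nat \<Rightarrow> real" where
  "quantile_grid d k =
    (if k = 0 then - 1 else if real k * d \<le> 2 then endpoint_quantile (real k * d) else 2 * pi + 1)"

lemma quantile_grid_le_endpoint_cdf:
  assumes "0 < d" "real k * d \<le> 2"
  shows "real k * d \<le> endpoint_cdf (quantile_grid d k)"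
proof (cases "k = 0")
  case True
  then show ?thesis by (simp add: endpoint_cdf_nonneg)
next
  case False
  then have "0 < real k * d" using assms(1) by simp
  then show ?thesis using False assms(2) le_endpoint_cdf_quantile by (simp add: quantile_grid_def)
qed

lemma endpoint_cdf_less_quantile_grid:
  assumes "0 < d" "y < quantile_grid d (Suc k)"
  shows "endpoint_cdf y < real (Suc k) * d"
proof (cases "real (Suc k) * d \<le> 2")
  case True
  then show ?thesis
    using assms by (intro endpoint_cdf_less_quantile) (auto simp: quantile_grid_def)
next
  case False
  then show ?thesis using endpoint_cdf_le_2[of y] by linarith
qed

lemma endpoint_mass_grid_cell_le:
  assumes "0 < d" "real k * d \<le> 2" "quantile_grid d k < quantile_grid d (Suc k)"
  shows "prob {\<omega>\<in>space M. quantile_grid d k < L \<omega> \<and> L \<omega> < quantile_grid d (Suc k)}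
    + prob {\<omega>\<in>space M. quantile_grid d k < U \<omega> \<and> U \<omega> < quantile_grid d (Suc k)} \<le> d"
proof (rule endpoint_mass_le[OF assms(3)])
  fix y assume "quantile_grid d (Suc k) > y"
  then have "endpoint_cdf y < real k * d + d"
    using endpoint_cdf_less_quantile_grid[OF assms(1)] by (simp add: algebra_simps)
  then show "endpoint_cdf y \<le> endpoint_cdf (quantile_grid d k) + d"
    using quantile_grid_le_endpoint_cdf[OF assms(1,2)] by linarith
qed

lemma cover_prob_le_grid_cell:
  assumes d: "0 < d" "real k * d \<le> 2" and x: "x \<in> S1" "quantile_grid d k < x" "x < quantile_grid d (Suc k)"
  shows "cover_prob M L U x
    \<le> prob {\<omega>\<in>space M. (L \<omega>, U \<omega>) \<in> arcs_spanning (quantile_grid d k) (quantile_grid d (Suc k))} + d"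
  using cover_prob_le_arcs_spanning[OF x] endpoint_mass_grid_cell_le[OF d] x by simp

lemma grid_cell_containing:
  assumes d: "0 < d" and x: "x \<in> S1"
  obtains k where "real k * d \<le> 2" "quantile_grid d k \<le> x" "x < quantile_grid d (Suc k)"
proof
  define k where "k = nat \<lfloor>endpoint_cdf x / d\<rfloor>"
  have "real k = of_int \<lfloor>endpoint_cdf x / d\<rfloor>"
    using d endpoint_cdf_nonneg[of x] by (simp add: k_def)
  then have "real k \<le> endpoint_cdf x / d" "endpoint_cdf x / d < real k + 1"
    by simp_all
  then have k: "real k * d \<le> endpoint_cdf x" "endpoint_cdf x < real (Suc k) * d"
    using d by (simp_all add: field_simps)
  show "real k * d \<le> 2" using k endpoint_cdf_le_2[of x] by linarith
  show "quantile_grid d k \<le> x"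
    using k d x endpoint_quantile_le[of "real k * d" x] endpoint_cdf_le_2[of x]
    by (auto simp: quantile_grid_def S1_def)
  show "x < quantile_grid d (Suc k)"
  proof (cases "real (Suc k) * d \<le> 2")
    case True
    have "\<not> endpoint_quantile (real (Suc k) * d) \<le> x"
    proof
      assume "endpoint_quantile (real (Suc k) * d) \<le> x"
      then have "endpoint_cdf (endpoint_quantile (real (Suc k) * d)) \<le> endpoint_cdf x"
        by (rule endpoint_cdf_mono)
      moreover have "real (Suc k) * d \<le> endpoint_cdf (endpoint_quantile (real (Suc k) * d))"
        using True d by (intro le_endpoint_cdf_quantile) auto
      ultimately show False using k by linarith
    qed
    then show ?thesis using True by (simp add: quantile_grid_def)
  next
    case False
    then show ?thesis using x by (simp add: quantile_grid_def S1_def)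
  qed
qed

definition grid_arc_family :: "real \<Rightarrow> (real \<times> real) set set" where
  "grid_arc_family d =
    (\<lambda>k. arcs_containing (quantile_grid d k)) ` {k\<in>{1..nat \<lfloor>2 / d\<rfloor>}. quantile_grid d k \<in> S1} \<union>
    (\<lambda>k. arcs_spanning (quantile_grid d k) (quantile_grid d (Suc k))) `
      {k\<in>{..nat \<lfloor>2 / d\<rfloor>}. \<exists>x\<in>S1. quantile_grid d k < x \<and> x < quantile_grid d (Suc k)}"

lemma le_nat_floor_iff: "0 < d \<Longrightarrow> k \<le> nat \<lfloor>2 / d\<rfloor> \<longleftrightarrow> real k * d \<le> 2"
  by (simp add: le_nat_iff le_floor_iff pos_le_divide_eq)

lemma finite_grid_arc_family: "finite (grid_arc_family d)"
  by (simp add: grid_arc_family_def)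

lemma card_grid_arc_family_le: "card (grid_arc_family d) \<le> 2 * nat \<lfloor>2 / d\<rfloor> + 1"
proof -
  let ?K = "nat \<lfloor>2 / d\<rfloor>"
  have "card ((\<lambda>k. arcs_containing (quantile_grid d k)) ` {k\<in>{1..?K}. quantile_grid d k \<in> S1}) \<le> card {1..?K}"
    by (rule order.trans[OF card_image_le card_mono]) auto
  moreover have "card ((\<lambda>k. arcs_spanning (quantile_grid d k) (quantile_grid d (Suc k))) `
      {k\<in>{..?K}. \<exists>x\<in>S1. quantile_grid d k < x \<and> x < quantile_grid d (Suc k)}) \<le> card {..?K}"
    by (rule order.trans[OF card_image_le card_mono]) auto
  ultimately show ?thesis
    unfolding grid_arc_family_def using card_Un_le by (fastforce intro: order.trans)
qed

lemma grid_arc_family_sets: "B \<in> grid_arc_family d \<Longrightarrow> B \<in> sets borel"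
  by (auto simp: grid_arc_family_def)

lemma prob_grid_arc_family_ge:
  assumes d: "0 < d" and s: "\<forall>x\<in>S1. s \<le> cover_prob M L U x" and B: "B \<in> grid_arc_family d"
  shows "s - d \<le> prob {\<omega>\<in>space M. (L \<omega>, U \<omega>) \<in> B}"
proof (cases rule: UnE[OF B[unfolded grid_arc_family_def]])
  case 1
  then show ?thesis using s d by (auto simp: arcs_containing_def cover_prob_def)
next
  case 2
  then obtain k x where "k \<le> nat \<lfloor>2 / d\<rfloor>" "x \<in> S1" "quantile_grid d k < x" "x < quantile_grid d (Suc k)"
    and "B = arcs_spanning (quantile_grid d k) (quantile_grid d (Suc k))"
    by auto
  then show ?thesis using s cover_prob_le_grid_cell[OF d, of k x] le_nat_floor_iff[OF d] by fastforce
qed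

lemma grid_arc_family_covers:
  assumes d: "0 < d" and x: "x \<in> S1"
  shows "\<exists>B\<in>grid_arc_family d. B \<subseteq> arcs_containing x"
proof -
  let ?q = "quantile_grid d"
  obtain k where k: "real k * d \<le> 2" "?q k \<le> x" "x < ?q (Suc k)"
    using grid_cell_containing[OF d x] by blast
  then have k_le: "k \<le> nat \<lfloor>2 / d\<rfloor>" using le_nat_floor_iff[OF d] by simp
  show ?thesis
  proof (cases "?q k = x")
    case True
    have "k \<noteq> 0"
    proof
      assume "k = 0"
      with True have "x = - 1" by (simp add: quantile_grid_def)
      with x show False by (simp add: S1_def)
    qed
    with k_le True x have "k \<in> {k\<in>{1..nat \<lfloor>2 / d\<rfloor>}. ?q k \<in> S1}" by simp
    then have "arcs_containing (?q k) \<in> grid_arc_family d"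
      unfolding grid_arc_family_def by (intro UnI1 imageI)
    with True show ?thesis by auto
  next
    case False
    with k(2) have lower: "?q k < x" by simp
    with k(3) k_le x have "k \<in> {k\<in>{..nat \<lfloor>2 / d\<rfloor>}. \<exists>x\<in>S1. ?q k < x \<and> x < ?q (Suc k)}" by auto
    then have "arcs_spanning (?q k) (?q (Suc k)) \<in> grid_arc_family d"
      unfolding grid_arc_family_def by (intro UnI2 imageI)
    moreover have "arcs_spanning (?q k) (?q (Suc k)) \<subseteq> arcs_containing x"
      using x lower k(3) by (rule arcs_spanning_subset)
    ultimately show ?thesis by blast
  qed
qed

lemma prob_low_empirical_coverage:
  fixes Ls Us :: "nat \<Rightarrow> 'a \<Rightarrow> real"
  assumes indep: "indep_vars (\<lambda>_. borel) (\<lambda>i \<omega>. (Ls i \<omega>, Us i \<omega>)) {..<n}"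
    and distr_eq: "\<forall>i<n. distr M borel (\<lambda>\<omega>. (Ls i \<omega>, Us i \<omega>)) = distr M borel (\<lambda>\<omega>. (L \<omega>, U \<omega>))"
    and s: "0 < s" "\<forall>x\<in>S1. s \<le> cover_prob M L U x"
  obtains A where "A \<in> sets M" "{\<omega>\<in>space M. \<exists>x\<in>S1. sigma_hat n Ls Us x \<omega> < s / 2} \<subseteq> A"
    "prob A \<le> 6 * exp (- 2 * real n * s\<^sup>2 / 36)"
proof (cases "6 < exp (real n * s\<^sup>2 / 18)")
  case False
  have "1 = exp (real n * s\<^sup>2 / 18) * exp (- 2 * real n * s\<^sup>2 / 36)"
    by (simp add: mult_exp_exp)
  also have "\<dots> \<le> 6 * exp (- 2 * real n * s\<^sup>2 / 36)"
    using False by (intro mult_right_mono) auto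
  finally show ?thesis by (intro that[of "space M"]) (auto simp: prob_space)
next
  case True
  then have n: "0 < n" by (cases n) auto
  have "s \<le> 1"
    using s(2) order.trans[OF _ prob_le_1] by (force simp: cover_prob_def S1_def)
  define \<F> where "\<F> = grid_arc_family (s / 10)"
  define low where
    "low B = {\<omega>\<in>space M. (\<Sum>i<n. indicator B (Ls i \<omega>, Us i \<omega>)) < real n * s / 2}" for B
  have pairs_measurable: "(\<lambda>\<omega>. (Ls i \<omega>, Us i \<omega>)) \<in> borel_measurable M" if "i < n" for i
    using indep that by (auto simp: indep_vars_def)
  have low_sets: "low B \<in> sets M" if "B \<in> \<F>" for B
  proof -
    have "(\<lambda>\<omega>. \<Sum>i<n. indicator B (Ls i \<omega>, Us i \<omega>) :: real) \<in> borel_measurable M"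
      using grid_arc_family_sets that unfolding \<F>_def
      by (intro borel_measurable_sum measurable_compose[OF pairs_measurable borel_measurable_indicator]) auto
    then show ?thesis unfolding low_def by measurable
  qed
  have prob_low: "prob (low B) \<le> (1 - 9 / 20 * s) ^ n * 2 powr (real n * s / 2)" if "B \<in> \<F>" for B
    using prob_count_less_le[OF indep distr_eq _ _, of B "s - s / 10" "real n * s / 2"] that s
      grid_arc_family_sets prob_grid_arc_family_ge[of "s / 10" s B]
    by (simp add: low_def \<F>_def algebra_simps)
  have "\<forall>x\<in>S1. \<exists>B\<in>\<F>. B \<subseteq> arcs_containing x"
    using grid_arc_family_covers s(1) by (simp add: \<F>_def)
  then have "{\<omega>\<in>space M. \<exists>x\<in>S1. sigma_hat n Ls Us x \<omega> < s / 2} \<subseteq> (\<Union>B\<in>\<F>. low B)"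
    unfolding low_def by (rule low_empirical_coverage_subset[OF n])
  moreover have "prob (\<Union>B\<in>\<F>. low B) \<le> 6 * exp (- 2 * real n * s\<^sup>2 / 36)"
  proof -
    let ?K = "real (nat \<lfloor>2 / (s / 10)\<rfloor>)"
    have "prob (\<Union>B\<in>\<F>. low B) \<le> (\<Sum>B\<in>\<F>. prob (low B))"
      using finite_grid_arc_family low_sets by (intro measure_UNION_le) (auto simp: \<F>_def)
    also have "\<dots> \<le> real (card \<F>) * ((1 - 9 / 20 * s) ^ n * 2 powr (real n * s / 2))"
      using sum_mono[OF prob_low] by simp
    also have "\<dots> \<le> (2 * ?K + 1) * ((1 - 9 / 20 * s) ^ n * 2 powr (real n * s / 2))"
      using card_grid_arc_family_le[of "s / 10"] \<open>s \<le> 1\<close> by (intro mult_right_mono) (simp_all add: \<F>_def)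
    also have "\<dots> \<le> 6 * exp (- 2 * real n * s\<^sup>2 / 36)"
    proof (rule chernoff_union_bound_le[OF s(1) \<open>s \<le> 1\<close> True])
      show "?K \<le> 20 / s" using s(1) by simp
    qed simp
    finally show ?thesis .
  qed
  ultimately show ?thesis
    using low_sets finite_grid_arc_family by (intro that[of "\<Union>B\<in>\<F>. low B"]) (auto simp: \<F>_def)
qed

end


section \<open>The squared \<open>L\<^sup>2\<close> error of the estimator\<close>

lemma nn_integral_mult_indicator_le:
  assumes "AE \<omega> in M. g \<omega> \<le> C" "E \<subseteq> A" "A \<in> sets M"
  shows "(\<integral>\<^sup>+\<omega>. g \<omega> * indicator E \<omega> \<partial>M) \<le> C * emeasure M A"
proof -
  have "(\<integral>\<^sup>+\<omega>. g \<omega> * indicator E \<omega> \<partial>M) \<le> (\<integral>\<^sup>+\<omega>. C * indicator A \<omega> \<partial>M)"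
    using assms(1) by (rule nn_integral_mono_AE[OF AE_mp]) (use assms(2) in \<open>auto split: split_indicator\<close>)
  then show ?thesis using assms(3) by (simp add: nn_integral_cmult_indicator)
qed

lemma S1_sets [measurable]: "S1 \<in> sets borel"
  by (simp add: S1_def)

lemma L2sq_eq_nn_integral: "L2sq g = (\<integral>\<^sup>+ x. ennreal ((g x * indicator S1 x)\<^sup>2) \<partial>lborel)"
  unfolding L2sq_def by (intro nn_integral_cong) (auto simp: indicator_def)

lemma L2sq_diff_le:
  assumes [measurable]: "(\<lambda>x. p x * indicator S1 x) \<in> borel_measurable lborel"
    "(\<lambda>x. q x * indicator S1 x) \<in> borel_measurable lborel"
  shows "L2sq (\<lambda>x. p x - q x) \<le> 2 * L2sq p + 2 * L2sq q"
proof -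
  have "ennreal (((p x - q x) * indicator S1 x)\<^sup>2)
      \<le> 2 * ennreal ((p x * indicator S1 x)\<^sup>2) + 2 * ennreal ((q x * indicator S1 x)\<^sup>2)" for x
  proof -
    have "((p x - q x) * indicator S1 x)\<^sup>2 \<le> 2 * (p x * indicator S1 x)\<^sup>2 + 2 * (q x * indicator S1 x)\<^sup>2"
      using sum_squares_bound[of "p x * indicator S1 x" "- q x * indicator S1 x"]
      by (simp add: power2_eq_square algebra_simps)
    then have "ennreal (((p x - q x) * indicator S1 x)\<^sup>2)
        \<le> ennreal (2 * (p x * indicator S1 x)\<^sup>2 + 2 * (q x * indicator S1 x)\<^sup>2)"
      by (rule ennreal_leI)
    then show ?thesis by (simp add: ennreal_mult)
  qed
  then have "L2sq (\<lambda>x. p x - q x) \<le> (\<integral>\<^sup>+ x. 2 * ennreal ((p x * indicator S1 x)\<^sup>2)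
      + 2 * ennreal ((q x * indicator S1 x)\<^sup>2) \<partial>lborel)"
    unfolding L2sq_eq_nn_integral by (intro nn_integral_mono)
  also have "\<dots> = 2 * L2sq p + 2 * L2sq q"
    unfolding L2sq_eq_nn_integral by (simp add: nn_integral_add nn_integral_cmult)
  finally show ?thesis .
qed

lemma set_integrable_mult_square_integrable:
  fixes f g :: "'a \<Rightarrow> real"
  assumes [measurable]: "f \<in> borel_measurable M" "g \<in> borel_measurable M" "A \<in> sets M"
    and "set_integrable M A (\<lambda>x. (f x)\<^sup>2)" "set_integrable M A (\<lambda>x. (g x)\<^sup>2)"
  shows "set_integrable M A (\<lambda>x. f x * g x)"
  unfolding set_integrable_def
proof (rule Bochner_Integration.integrable_bound)
  show "integrable M (\<lambda>x. indicator A x *\<^sub>R (f x)\<^sup>2 + indicator A x *\<^sub>R (g x)\<^sup>2)"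
    using assms(4,5) unfolding set_integrable_def by (rule Bochner_Integration.integrable_add)
  have "\<bar>f x * g x\<bar> \<le> (f x)\<^sup>2 + (g x)\<^sup>2" for x
  proof -
    have "2 * (\<bar>f x\<bar> * \<bar>g x\<bar>) \<le> (f x)\<^sup>2 + (g x)\<^sup>2"
      using sum_squares_bound[of "\<bar>f x\<bar>" "\<bar>g x\<bar>"] by (simp add: mult.assoc)
    then show ?thesis
      unfolding abs_mult using mult_nonneg_nonneg[OF abs_ge_zero abs_ge_zero, of "f x" "g x"] by linarith
  qed
  then show "AE x in M. norm (indicator A x *\<^sub>R (f x * g x))
      \<le> norm (indicator A x *\<^sub>R (f x)\<^sup>2 + indicator A x *\<^sub>R (g x)\<^sup>2)"
    by (auto simp: indicator_def)
qed measurable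

lemma L2sq_orthonormal_sum:
  fixes \<phi> :: "'l \<Rightarrow> real \<Rightarrow> real" and a :: "'l \<Rightarrow> real"
  assumes fin: "finite \<Lambda>"
    and basis_meas: "\<forall>l\<in>\<Lambda>. \<phi> l \<in> borel_measurable lborel"
    and basis_L2: "\<forall>l\<in>\<Lambda>. set_integrable lborel S1 (\<lambda>x. (\<phi> l x)\<^sup>2)"
    and orthonormal: "\<forall>l\<in>\<Lambda>. \<forall>k\<in>\<Lambda>. (LINT x:S1|lborel. \<phi> l x * \<phi> k x) = (if l = k then 1 else 0)"
  shows "L2sq (\<lambda>x. \<Sum>l\<in>\<Lambda>. a l * \<phi> l x) = ennreal (\<Sum>l\<in>\<Lambda>. (a l)\<^sup>2)"
proof -
  define h where "h l k x = indicator S1 x * (\<phi> l x * \<phi> k x)" for l k x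
  have integrable_h: "integrable lborel (h l k)" if "l \<in> \<Lambda>" "k \<in> \<Lambda>" for l k
    using set_integrable_mult_square_integrable[of "\<phi> l" lborel "\<phi> k" S1] basis_meas basis_L2 that
    by (simp add: h_def[abs_def] set_integrable_def)
  have square: "((\<Sum>l\<in>\<Lambda>. a l * \<phi> l x) * indicator S1 x)\<^sup>2 = (\<Sum>l\<in>\<Lambda>. \<Sum>k\<in>\<Lambda>. a l * a k * h l k x)" for x
    by (simp add: h_def power2_eq_square indicator_def sum_product algebra_simps)
  have integrable_expansion: "integrable lborel (\<lambda>x. \<Sum>l\<in>\<Lambda>. \<Sum>k\<in>\<Lambda>. a l * a k * h l k x)"
    using integrable_h by (intro Bochner_Integration.integrable_sum integrable_mult_right) auto
  have "L2sq (\<lambda>x. \<Sum>l\<in>\<Lambda>. a l * \<phi> l x) = (\<integral>\<^sup>+x. ennreal (\<Sum>l\<in>\<Lambda>. \<Sum>k\<in>\<Lambda>. a l * a k * h l k x) \<partial>lborel)"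
    unfolding L2sq_eq_nn_integral square ..
  also have "\<dots> = ennreal (\<integral>x. (\<Sum>l\<in>\<Lambda>. \<Sum>k\<in>\<Lambda>. a l * a k * h l k x) \<partial>lborel)"
    by (intro nn_integral_eq_integral integrable_expansion AE_I2) (simp flip: square)
  also have "(\<integral>x. (\<Sum>l\<in>\<Lambda>. \<Sum>k\<in>\<Lambda>. a l * a k * h l k x) \<partial>lborel)
      = (\<Sum>l\<in>\<Lambda>. \<Sum>k\<in>\<Lambda>. a l * a k * (if l = k then 1 else 0))"
    using integrable_h orthonormal
    by (simp add: Bochner_Integration.integral_sum) (simp add: h_def set_lebesgue_integral_def)
  also have "\<dots> = (\<Sum>l\<in>\<Lambda>. (a l)\<^sup>2)"
    using fin by (simp add: power2_eq_square if_distrib cong: if_cong)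
  finally show ?thesis .
qed

lemma sum_squares_mean_le:
  fixes c :: "nat \<Rightarrow> 'l \<Rightarrow> real"
  assumes "0 \<le> B" and bound: "\<forall>i<n. (\<Sum>l\<in>\<Lambda>. (c i l)\<^sup>2) \<le> B"
  shows "(\<Sum>l\<in>\<Lambda>. (1 / real n * (\<Sum>i<n. c i l))\<^sup>2) \<le> B"
proof (cases "n = 0")
  case True
  then show ?thesis using assms by simp
next
  case False
  have "(1 / real n * (\<Sum>i<n. c i l))\<^sup>2 \<le> 1 / real n * (\<Sum>i<n. (c i l)\<^sup>2)" for l
    using sum_squared_le_sum_of_squares[of "\<lambda>i. c i l" "{..<n}"] False
    by (simp add: power2_eq_square field_simps)
  then have "(\<Sum>l\<in>\<Lambda>. (1 / real n * (\<Sum>i<n. c i l))\<^sup>2) \<le> 1 / real n * (\<Sum>i<n. \<Sum>l\<in>\<Lambda>. (c i l)\<^sup>2)"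
    by (simp add: sum_mono sum_distrib_left sum.swap[of _ \<Lambda>])
  also have "\<dots> \<le> 1 / real n * (\<Sum>i<n. B)"
    using bound by (intro mult_left_mono sum_mono) auto
  also have "\<dots> = B" using False by simp
  finally show ?thesis .
qed

lemma L2sq_psi_hat_le:
  fixes \<phi> :: "'l \<Rightarrow> real \<Rightarrow> real"
  assumes fin: "finite \<Lambda>"
    and basis_meas: "\<forall>l\<in>\<Lambda>. \<phi> l \<in> borel_measurable lborel"
    and basis_L2: "\<forall>l\<in>\<Lambda>. set_integrable lborel S1 (\<lambda>x. (\<phi> l x)\<^sup>2)"
    and orthonormal: "\<forall>l\<in>\<Lambda>. \<forall>k\<in>\<Lambda>. (LINT x:S1|lborel. \<phi> l x * \<phi> k x) = (if l = k then 1 else 0)"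
    and "0 \<le> B"
    and bound: "\<forall>i<n. Xs i \<omega> \<in> arc (Ls i \<omega>) (Us i \<omega>) \<longrightarrow> (\<Sum>l\<in>\<Lambda>. (\<phi> l (Xs i \<omega>))\<^sup>2) \<le> B"
  shows "L2sq (psi_hat n \<Lambda> \<phi> Xs Ls Us \<omega>) \<le> ennreal B"
proof -
  define c where "c i l = Delta Xs Ls Us i \<omega> * \<phi> l (Xprime Xs Ls Us i \<omega>)" for i l
  have "psi_hat n \<Lambda> \<phi> Xs Ls Us \<omega> = (\<lambda>x. \<Sum>l\<in>\<Lambda>. (1 / real n * (\<Sum>i<n. c i l)) * \<phi> l x)"
    by (simp add: psi_hat_def c_def fun_eq_iff)
  then have "L2sq (psi_hat n \<Lambda> \<phi> Xs Ls Us \<omega>) = ennreal (\<Sum>l\<in>\<Lambda>. (1 / real n * (\<Sum>i<n. c i l))\<^sup>2)"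
    by (simp only: L2sq_orthonormal_sum[OF fin basis_meas basis_L2 orthonormal])
  also have "\<dots> \<le> ennreal B"
  proof (intro ennreal_leI sum_squares_mean_le[OF \<open>0 \<le> B\<close>] allI impI)
    fix i assume "i < n"
    then show "(\<Sum>l\<in>\<Lambda>. (c i l)\<^sup>2) \<le> B"
      using bound \<open>0 \<le> B\<close> by (simp add: c_def Delta_def Xprime_def)
  qed
  finally show ?thesis .
qed

lemma L2sq_psi_hat_error_le:
  fixes \<phi> :: "'l \<Rightarrow> real \<Rightarrow> real"
  assumes fin: "finite \<Lambda>"
    and basis_meas: "\<forall>l\<in>\<Lambda>. \<phi> l \<in> borel_measurable lborel"
    and basis_L2: "\<forall>l\<in>\<Lambda>. set_integrable lborel S1 (\<lambda>x. (\<phi> l x)\<^sup>2)"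
    and orthonormal: "\<forall>l\<in>\<Lambda>. \<forall>k\<in>\<Lambda>. (LINT x:S1|lborel. \<phi> l x * \<phi> k x) = (if l = k then 1 else 0)"
    and "0 \<le> B"
    and bound: "\<forall>i<n. Xs i \<omega> \<in> arc (Ls i \<omega>) (Us i \<omega>) \<longrightarrow> (\<Sum>l\<in>\<Lambda>. (\<phi> l (Xs i \<omega>))\<^sup>2) \<le> B"
    and \<psi>: "(\<lambda>x. \<psi> x * indicator S1 x) \<in> borel_measurable lborel"
  shows "L2sq (\<lambda>x. psi_hat n \<Lambda> \<phi> Xs Ls Us \<omega> x - \<psi> x) \<le> 2 * ennreal B + 2 * L2sq \<psi>"
proof -
  have "(\<lambda>x. psi_hat n \<Lambda> \<phi> Xs Ls Us \<omega> x * indicator S1 x) \<in> borel_measurable lborel"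
    unfolding psi_hat_def using basis_meas
    by (intro borel_measurable_times borel_measurable_sum borel_measurable_indicator) auto
  then have "L2sq (\<lambda>x. psi_hat n \<Lambda> \<phi> Xs Ls Us \<omega> x - \<psi> x)
      \<le> 2 * L2sq (psi_hat n \<Lambda> \<phi> Xs Ls Us \<omega>) + 2 * L2sq \<psi>"
    using \<psi> by (rule L2sq_diff_le)
  also have "\<dots> \<le> 2 * ennreal B + 2 * L2sq \<psi>"
    using L2sq_psi_hat_le[where \<omega>=\<omega> and Xs=Xs and Ls=Ls and Us=Us, OF fin basis_meas basis_L2 orthonormal \<open>0 \<le> B\<close> bound] by (intro add_right_mono mult_left_mono) auto
  finally show ?thesis .
qed

lemma (in prob_space) AE_L2sq_psi_hat_error_le:
  fixes \<phi> :: "'l \<Rightarrow> real \<Rightarrow> real" and Xs Ls Us :: "nat \<Rightarrow> 'a \<Rightarrow> real"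
  assumes fin: "finite \<Lambda>"
    and basis_meas: "\<forall>l\<in>\<Lambda>. \<phi> l \<in> borel_measurable lborel"
    and basis_L2: "\<forall>l\<in>\<Lambda>. set_integrable lborel S1 (\<lambda>x. (\<phi> l x)\<^sup>2)"
    and orthonormal: "\<forall>l\<in>\<Lambda>. \<forall>k\<in>\<Lambda>. (LINT x:S1|lborel. \<phi> l x * \<phi> k x) = (if l = k then 1 else 0)"
    and "0 \<le> B" and sup_bound: "AE x in lborel. x \<in> S1 \<longrightarrow> (\<Sum>l\<in>\<Lambda>. (\<phi> l x)\<^sup>2) \<le> B"
    and X: "distributed M lborel X g" "\<forall>\<omega>\<in>space M. X \<omega> \<in> S1"
    and samples: "\<forall>i<n. Xs i \<in> borel_measurable M" "\<forall>i<n. distr M borel (Xs i) = distr M borel X"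
    and \<psi>: "(\<lambda>x. \<psi> x * indicator S1 x) \<in> borel_measurable lborel"
  shows "AE \<omega> in M. L2sq (\<lambda>x. psi_hat n \<Lambda> \<phi> Xs Ls Us \<omega> x - \<psi> x) \<le> 2 * ennreal B + 2 * L2sq \<psi>"
proof -
  obtain N where sup_bound_off_N: "\<And>x. x \<in> space lborel - N \<Longrightarrow> x \<in> S1 \<longrightarrow> (\<Sum>l\<in>\<Lambda>. (\<phi> l x)\<^sup>2) \<le> B"
    and N: "N \<in> null_sets lborel"
    using AE_E3[OF sup_bound] by blast
  have "AE \<omega> in M. X \<omega> \<in> S1 - N"
    using AE_space AE_distributed_not_in_null_set[OF X(1) N] by eventually_elim (use X(2) in auto)
  then have "AE \<omega> in M. \<forall>i<n. Xs i \<omega> \<in> S1 - N"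
    using samples distributed_measurable[OF X(1)] N
    by (intro AE_all_identically_distributed[where N=borel]) auto
  then show ?thesis
  proof (rule eventually_mono)
    fix \<omega> assume "\<forall>i<n. Xs i \<omega> \<in> S1 - N"
    then show "L2sq (\<lambda>x. psi_hat n \<Lambda> \<phi> Xs Ls Us \<omega> x - \<psi> x) \<le> 2 * ennreal B + 2 * L2sq \<psi>"
      using sup_bound_off_N \<open>0 \<le> B\<close> \<psi>
      by (intro L2sq_psi_hat_error_le[OF fin basis_meas basis_L2 orthonormal]) auto
  qed
qed

theorem proposition5p5:
  fixes M :: "'a measure" and X L U :: "'a \<Rightarrow> real"
    and Xs Ls Us :: "nat \<Rightarrow> 'a \<Rightarrow> real" and n :: nat
    and f :: "real \<Rightarrow> real" and \<sigma>\<^sub>0 \<Phi>\<^sub>0 :: real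
    and \<Lambda> :: "'l set" and \<phi> :: "'l \<Rightarrow> real \<Rightarrow> real"
  assumes "prob_space M"
    and meas: "X \<in> borel_measurable M" "L \<in> borel_measurable M" "U \<in> borel_measurable M"
    and range: "\<forall>\<omega>\<in>space M. X \<omega> \<in> S1 \<and> L \<omega> \<in> S1 \<and> U \<omega> \<in> S1"
    and indepX: "prob_space.indep_set M (sets (vimage_algebra (space M) X borel))
                 (sets (vimage_algebra (space M) (\<lambda>\<omega>. (L \<omega>, U \<omega>)) (borel :: (real \<times> real) measure)))"
    and LU: "AE \<omega> in M. L \<omega> \<noteq> U \<omega>"
    and dens: "distributed M lborel X (\<lambda>x. ennreal (f x))" and f_nonneg: "\<forall>x. 0 \<le> f x"
    and iid_indep: "prob_space.indep_vars M (\<lambda>_. borel) (\<lambda>i \<omega>. (Xs i \<omega>, Ls i \<omega>, Us i \<omega>)) {..<n}"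
    and iid_dist: "\<forall>i<n. distr M borel (\<lambda>\<omega>. (Xs i \<omega>, Ls i \<omega>, Us i \<omega>))
                        = distr M borel (\<lambda>\<omega>. (X \<omega>, L \<omega>, U \<omega>))"
    and psi_L2: "in_L2 (\<lambda>x. f x * cover_prob M L U x)"
    and A: "\<sigma>\<^sub>0 > 0" "\<forall>x\<in>S1. cover_prob M L U x \<ge> \<sigma>\<^sub>0"
    and fin: "finite \<Lambda>" and dim: "card \<Lambda> \<le> n"
    and basis_meas: "\<forall>l\<in>\<Lambda>. \<phi> l \<in> borel_measurable lborel"
    and basis_L2: "\<forall>l\<in>\<Lambda>. set_integrable lborel S1 (\<lambda>x. (\<phi> l x)\<^sup>2)"
    and orthonormal: "\<forall>l\<in>\<Lambda>. \<forall>k\<in>\<Lambda>.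
                  (LINT x:S1|lborel. \<phi> l x * \<phi> k x) = (if l = k then 1 else 0)"
    and Phi0: "\<Phi>\<^sub>0 > 0"
    and sup_bound: "AE x in lborel. x \<in> S1 \<longrightarrow> (\<Sum>l\<in>\<Lambda>. (\<phi> l x)\<^sup>2) \<le> \<Phi>\<^sub>0\<^sup>2 * real (card \<Lambda>)"
  shows "(\<integral>\<^sup>+ \<omega>. L2sq (\<lambda>x. psi_hat n \<Lambda> \<phi> Xs Ls Us \<omega> x - f x * cover_prob M L U x)
              * indicator {\<omega> \<in> space M. \<exists>x\<in>S1. sigma_hat n Ls Us x \<omega> < \<sigma>\<^sub>0 / 2} \<omega> \<partial>M)
         \<le> (ennreal (real n * \<Phi>\<^sub>0\<^sup>2) + L2sq (\<lambda>x. f x * cover_prob M L U x))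
             * ennreal (12 * exp (- 2 * real n * \<sigma>\<^sub>0\<^sup>2 / 36))"
proof -
  interpret prob_space M by fact
  interpret random_arc M L U using meas(2,3) range by unfold_locales auto
  note marginals = iid_triple_marginals[OF iid_indep iid_dist meas]
  obtain E where E: "E \<in> sets M" "{\<omega>\<in>space M. \<exists>x\<in>S1. sigma_hat n Ls Us x \<omega> < \<sigma>\<^sub>0 / 2} \<subseteq> E"
    "prob E \<le> 6 * exp (- 2 * real n * \<sigma>\<^sub>0\<^sup>2 / 36)"
    using prob_low_empirical_coverage[OF marginals(1,2) A] by blast
  have "\<Phi>\<^sub>0\<^sup>2 * real (card \<Lambda>) \<le> real n * \<Phi>\<^sub>0\<^sup>2"
    using dim by (simp add: mult.commute mult_right_mono)
  with sup_bound have "AE x in lborel. x \<in> S1 \<longrightarrow> (\<Sum>l\<in>\<Lambda>. (\<phi> l x)\<^sup>2) \<le> real n * \<Phi>\<^sub>0\<^sup>2"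
    by (auto elim: eventually_mono)
  then have "AE \<omega> in M. L2sq (\<lambda>x. psi_hat n \<Lambda> \<phi> Xs Ls Us \<omega> x - f x * cover_prob M L U x)
      \<le> 2 * ennreal (real n * \<Phi>\<^sub>0\<^sup>2) + 2 * L2sq (\<lambda>x. f x * cover_prob M L U x)"
    using dens range marginals(3,4) psi_L2 unfolding in_L2_def
    by (intro AE_L2sq_psi_hat_error_le[OF fin basis_meas basis_L2 orthonormal]) auto
  then have "(\<integral>\<^sup>+ \<omega>. L2sq (\<lambda>x. psi_hat n \<Lambda> \<phi> Xs Ls Us \<omega> x - f x * cover_prob M L U x)
        * indicator {\<omega> \<in> space M. \<exists>x\<in>S1. sigma_hat n Ls Us x \<omega> < \<sigma>\<^sub>0 / 2} \<omega> \<partial>M)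
      \<le> (2 * ennreal (real n * \<Phi>\<^sub>0\<^sup>2) + 2 * L2sq (\<lambda>x. f x * cover_prob M L U x)) * emeasure M E"
    using E(2,1) by (rule nn_integral_mult_indicator_le)
  also have "\<dots> \<le> (2 * ennreal (real n * \<Phi>\<^sub>0\<^sup>2) + 2 * L2sq (\<lambda>x. f x * cover_prob M L U x))
      * ennreal (6 * exp (- 2 * real n * \<sigma>\<^sub>0\<^sup>2 / 36))"
    using E(3) by (intro mult_left_mono) (auto simp: emeasure_eq_measure)
  also have "\<dots> = (ennreal (real n * \<Phi>\<^sub>0\<^sup>2) + L2sq (\<lambda>x. f x * cover_prob M L U x))
      * ennreal (12 * exp (- 2 * real n * \<sigma>\<^sub>0\<^sup>2 / 36))"
    by (simp add: ennreal_mult algebra_simps)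
  finally show ?thesis .
qed

end
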